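(* Let $\Gamma$ be a simple, undirected, connected graph with $p\ge 2$ vertices and maximum degree $\Delta\ge 1$. Then $\gamma_{[3R]}(\Gamma)\le 3p-3\Delta+1$.
   Context: For a graph $\Gamma=(V,E)$ and $h:V\to\{0,1,2,3,4\}$, let $AN(v)=\{w\in N(v):h(w)\ge 1\}$, $AN[v]=AN(v)\cup\{v\}$ and $h(S)=\sum_{u\in S}h(u)$. $h$ is a triple Roman dominating function (3RDF) if every $v$ with $h(v)<3$ satisfies $h(AN[v])\ge|AN(v)|+3$. The triple Roman domination number $\gamma_{[3R]}(\Gamma)$ is the minimum weight $h(V)$ of a 3RDF of $\Gamma$. *)

theory Defs
  imports Main
begin

definition simple_graph :: "'a set \<Rightarrow> 'a set set \<Rightarrow> bool" where
  "simple_graph V E \<longleftrightarrow> finite V \<and> (\<forall>e\<in>E. e \<subseteq> V \<and> card e = 2)"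

definition nbhd :: "'a set \<Rightarrow> 'a set set \<Rightarrow> 'a \<Rightarrow> 'a set" where
  "nbhd V E v = {w\<in>V. {v, w} \<in> E}"

definition degree :: "'a set \<Rightarrow> 'a set set \<Rightarrow> 'a \<Rightarrow> nat" where
  "degree V E v = card (nbhd V E v)"

definition max_degree :: "'a set \<Rightarrow> 'a set set \<Rightarrow> nat" where
  "max_degree V E = Max (degree V E ` V)"

definition connected_graph :: "'a set \<Rightarrow> 'a set set \<Rightarrow> bool" where
  "connected_graph V E \<longleftrightarrow>
     (\<forall>u\<in>V. \<forall>v\<in>V. (u, v) \<in> {(x, y). x \<in> V \<and> y \<in> V \<and> {x, y} \<in> E}\<^sup>*)"

definition active_nbhd :: "'a set \<Rightarrow> 'a set set \<Rightarrow> ('a \<Rightarrow> nat) \<Rightarrow> 'a \<Rightarrow> 'a set" where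
  "active_nbhd V E h v = {w \<in> nbhd V E v. h w \<ge> 1}"

definition is_3RDF :: "'a set \<Rightarrow> 'a set set \<Rightarrow> ('a \<Rightarrow> nat) \<Rightarrow> bool" where
  "is_3RDF V E h \<longleftrightarrow>
     (\<forall>v\<in>V. h v \<le> 4) \<and> (\<forall>v. v \<notin> V \<longrightarrow> h v = 0) \<and>
     (\<forall>v\<in>V. h v < 3 \<longrightarrow>
        sum h (insert v (active_nbhd V E h v)) \<ge> card (active_nbhd V E h v) + 3)"

definition weight :: "'a set \<Rightarrow> ('a \<Rightarrow> nat) \<Rightarrow> nat" where
  "weight V h = sum h V"

definition triple_roman_domination_number :: "'a set \<Rightarrow> 'a set set \<Rightarrow> nat" where
  "triple_roman_domination_number V E = Min {weight V h | h. is_3RDF V E h}"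

end

theory Submission
  imports Defs
begin

text \<open>For a vertex v of maximum degree, label v with 4, its neighbours with 0 and
  every other vertex with 3. A neighbour of v sees v (weight 4) and at least weight 1 from each
  further active neighbour, so this is a 3RDF of weight 4 + 3(p - 1 - \<Delta>) = 3p - 3\<Delta> + 1.\<close>

lemma not_in_nbhd_self:
  assumes "simple_graph V E"
  shows "w \<notin> nbhd V E w"
  using assms by (auto simp: nbhd_def simple_graph_def)

lemma degree_less_card:
  assumes "simple_graph V E" and "v \<in> V"
  shows "degree V E v < card V"
proof -
  have fin: "finite V" using assms(1) by (simp add: simple_graph_def)
  have "nbhd V E v \<subset> V"
    using assms(2) not_in_nbhd_self[OF assms(1), of v]
    by (auto simp add: nbhd_def simp del: insert_absorb2)
  then show ?thesis unfolding degree_def by (rule psubset_card_mono[OF fin])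
qed

lemma triple_roman_domination_number_le_weight:
  assumes "finite V" and "is_3RDF V E h"
  shows "triple_roman_domination_number V E \<le> weight V h"
proof -
  have "{weight V g | g. is_3RDF V E g} \<subseteq> {..4 * card V}"
  proof clarify
    fix g assume "is_3RDF V E g"
    then have "sum g V \<le> (\<Sum>_\<in>V. 4)" by (intro sum_mono) (simp add: is_3RDF_def)
    then show "weight V g \<le> 4 * card V" by (simp add: weight_def)
  qed
  then have "finite {weight V g | g. is_3RDF V E g}" by (rule finite_subset) simp
  then show ?thesis
    unfolding triple_roman_domination_number_def using assms(2) by (intro Min_le) auto
qed

definition star_labelling :: "'a set \<Rightarrow> 'a set set \<Rightarrow> 'a \<Rightarrow> 'a \<Rightarrow> nat" where
  "star_labelling V E v x =
     (if x = v then 4 else if x \<in> nbhd V E v then 0 else if x \<in> V then 3 else 0)"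

lemma is_3RDF_star_labelling:
  assumes G: "simple_graph V E" and vV: "v \<in> V"
  shows "is_3RDF V E (star_labelling V E v)"
  unfolding is_3RDF_def
proof (intro conjI ballI allI impI)
  let ?h = "star_labelling V E v"
  fix w assume "w \<in> V" and "?h w < 3"
  then have wN: "w \<in> nbhd V E v" and "w \<noteq> v" and hw: "?h w = 0"
    by (auto simp: star_labelling_def split: if_splits)
  define A where "A = active_nbhd V E ?h w"
  have fin: "finite A"
    using G by (simp add: A_def active_nbhd_def nbhd_def simple_graph_def)
  have "w \<notin> A" using not_in_nbhd_self[OF G] by (auto simp: A_def active_nbhd_def)
  have vA: "v \<in> A"
    using wN vV by (auto simp: A_def active_nbhd_def nbhd_def star_labelling_def insert_commute)
  have "card A - 1 = card (A - {v})" using vA by simp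
  also have "\<dots> \<le> sum ?h (A - {v})"
    using sum_mono[of "A - {v}" "\<lambda>_. 1" ?h] by (simp add: A_def active_nbhd_def)
  finally have "card A + 3 \<le> ?h v + sum ?h (A - {v})"
    using vA fin by (simp add: star_labelling_def)
  also have "\<dots> = sum ?h (insert w A)"
    using fin vA \<open>w \<notin> A\<close> hw by (simp add: sum.remove)
  finally show "card (active_nbhd V E ?h w) + 3 \<le> sum ?h (insert w (active_nbhd V E ?h w))"
    by (simp add: A_def)
qed (use vV in \<open>auto simp: star_labelling_def nbhd_def\<close>)

lemma weight_star_labelling:
  assumes G: "simple_graph V E" and vV: "v \<in> V"
  shows "int (weight V (star_labelling V E v)) = 3 * int (card V) - 3 * int (degree V E v) + 1"
proof -
  let ?h = "star_labelling V E v" and ?N = "nbhd V E v"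
  have fin: "finite V" using G by (simp add: simple_graph_def)
  have NV: "insert v ?N \<subseteq> V" using vV by (auto simp: nbhd_def)
  have vN: "v \<notin> ?N" by (rule not_in_nbhd_self[OF G])
  have finN: "finite ?N" using fin by (simp add: nbhd_def)
  have "weight V ?h = sum ?h (insert v ?N) + sum ?h (V - insert v ?N)"
    unfolding weight_def using sum.subset_diff[OF NV fin] by (simp add: add.commute)
  also have "sum ?h (insert v ?N) = ?h v + sum ?h ?N"
    using vN finN by simp
  also have "sum ?h ?N = 0"
    using vN by (intro sum.neutral) (auto simp: star_labelling_def)
  also have "sum ?h (V - insert v ?N) = 3 * card (V - insert v ?N)"
    by (simp add: star_labelling_def)
  also have "card (V - insert v ?N) = card V - (degree V E v + 1)"
    using card_Diff_subset[OF _ NV] finN vN by (simp add: degree_def)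
  also have "?h v = 4" by (simp add: star_labelling_def)
  finally have "weight V ?h = 4 + 3 * (card V - (degree V E v + 1))"
    by simp
  then show ?thesis
    using degree_less_card[OF G vV] by (simp add: of_nat_diff)
qed

theorem proposition7:
  fixes V :: "'a set" and E :: "'a set set"
  assumes "simple_graph V E"
    and "connected_graph V E"
    and "card V \<ge> 2"
    and "max_degree V E \<ge> 1"
  shows "int (triple_roman_domination_number V E) \<le> 3 * int (card V) - 3 * int (max_degree V E) + 1"
proof -
  have fin: "finite V" using assms(1) by (simp add: simple_graph_def)
  have "max_degree V E \<in> degree V E ` V"
    unfolding max_degree_def using fin assms(3) by (intro Max_in) auto
  then obtain v where vV: "v \<in> V" and "degree V E v = max_degree V E" by auto
  moreover have "triple_roman_domination_number V E \<le> weight V (star_labelling V E v)"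
    using triple_roman_domination_number_le_weight[OF fin is_3RDF_star_labelling[OF assms(1) vV]] .
  ultimately show ?thesis
    using weight_star_labelling[OF assms(1) vV] by linarith
qed

end
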